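(* Let $\xi$ be a model with $\xi(1)=1$ which is not of the form $\xi(t)=at^2$. Then $\xi$ has non-negative replicon eigenvalue and is pure-like or critical if and only if $$\frac{\xi''(1)}{\xi'(1)}\le y_\xi\le\frac{\xi'(1)}{\xi''(0)}.$$
   Context: A model is $\xi(t)=\sum_{p\ge2}\beta_p^2t^p$, real $\beta_p$ not all zero, with $\xi(1+\epsilon)<\infty$ for some $\epsilon>0$. For $\xi$ not of the form $at^2$, $y_\xi$ is the unique $y\in(1,\infty)$ with $\frac{\xi(1)}{\xi'(1)}=\frac1{y-1}\big(\frac{y}{y-1}\log y-1\big)$; the convention $\xi'(1)/0=+\infty$ is used if $\xi''(0)=0$. The system $\xi(1)=\frac1m(\frac1m\log\frac{c+m}c-\frac1{c+m})$, $\frac1{\xi'(1)}=c(c+m)$ has a unique solution $m,c>0$; with $\phi(t)=m(1-t)+c$ and formal conjugate $\eta(t)=\xi(1)-\int_t^1\int_0^s\phi^{-2}d\tau ds$, the replicon eigenvalue is $\eta''(0)-\xi''(0)$. With $\nu'=\xi'(1),\nu''=\xi''(1)$, $ABA=\log(\nu''/\nu')-\frac{(\nu''-\nu')(\nu''-\nu'+\nu'^2)}{\nu''\nu'^2}$; pure-like means $ABA>0$, critical means $ABA=0$. *)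

theory Defs
  imports "HOL-Analysis.Analysis"
begin

definition is_model :: "(nat \<Rightarrow> real) \<Rightarrow> bool" where
  "is_model beta \<longleftrightarrow> (\<exists>p\<ge>2. beta p \<noteq> 0) \<and>
     (\<exists>\<epsilon>>0. summable (\<lambda>p. (if 2 \<le> p then (beta p)^2 * (1 + \<epsilon>)^p else 0)))"

definition xi :: "(nat \<Rightarrow> real) \<Rightarrow> real \<Rightarrow> real" where
  "xi beta t = (\<Sum>p. (if 2 \<le> p then (beta p)^2 * t^p else 0))"

definition xi1 :: "(nat \<Rightarrow> real) \<Rightarrow> real \<Rightarrow> real" where
  "xi1 beta = deriv (xi beta)"

definition xi2 :: "(nat \<Rightarrow> real) \<Rightarrow> real \<Rightarrow> real" where
  "xi2 beta = deriv (deriv (xi beta))"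

definition y_xi :: "(nat \<Rightarrow> real) \<Rightarrow> real" where
  "y_xi beta = (THE y. 1 < y \<and>
      xi beta 1 / xi1 beta 1 = (1 / (y - 1)) * ((y / (y - 1)) * ln y - 1))"

definition mc :: "(nat \<Rightarrow> real) \<Rightarrow> real \<times> real" where
  "mc beta = (THE (m, c). 0 < m \<and> 0 < c \<and>
      xi beta 1 = (1 / m) * ((1 / m) * ln ((c + m) / c) - 1 / (c + m)) \<and>
      1 / xi1 beta 1 = c * (c + m))"

definition phi :: "(nat \<Rightarrow> real) \<Rightarrow> real \<Rightarrow> real" where
  "phi beta t = fst (mc beta) * (1 - t) + snd (mc beta)"

definition eta :: "(nat \<Rightarrow> real) \<Rightarrow> real \<Rightarrow> real" where
  "eta beta t = xi beta 1 -
     (LBINT s=t..1. (LBINT \<tau>=0..s. 1 / (phi beta \<tau>)^2))"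

definition replicon :: "(nat \<Rightarrow> real) \<Rightarrow> real" where
  "replicon beta = deriv (deriv (eta beta)) 0 - xi2 beta 0"

definition ABA :: "(nat \<Rightarrow> real) \<Rightarrow> real" where
  "ABA beta = (let n1 = xi1 beta 1; n2 = xi2 beta 1 in
     ln (n2 / n1) - ((n2 - n1) * (n2 - n1 + n1^2)) / (n2 * n1^2))"

definition pure_like :: "(nat \<Rightarrow> real) \<Rightarrow> bool" where
  "pure_like beta \<longleftrightarrow> ABA beta > 0"

definition critical :: "(nat \<Rightarrow> real) \<Rightarrow> bool" where
  "critical beta \<longleftrightarrow> ABA beta = 0"

end

theory Submission
  imports Defs "HOL-Real_Asymp.Real_Asymp"
begin

text \<open>Let F(y) = yfun y = (1/(y - 1)) ((y/(y - 1)) ln y - 1), so that y_xi is the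
  solution of F(y) = 1/xi'(1) in (1, oo); F decreases strictly from 1/2 to 0 there.
  The substitution y = (c + m)/c turns the system defining (m, c) into
  F(y) = c (c + m) = 1/xi'(1), hence y = y_xi and phi(0)^2 = (c + m)^2 = y_xi/xi'(1).
  Since eta''(0) = phi(0)^-2, the replicon eigenvalue is xi'(1)/y_xi - xi''(0).
  On the other hand ABA = (nu'' - nu')^2/(nu' nu'') (F(nu''/nu') - 1/nu'), so by monotonicity
  of F, ABA >= 0 iff nu''/nu' <= y_xi. All this is meaningful because a model that is not
  quadratic has a positive coefficient of degree at least 3, whence xi'(1) > 2 xi(1) = 2
  and xi''(1) > xi'(1).\<close>

lemma deriv_powser:
  fixes c :: "nat \<Rightarrow> 'a::{real_normed_field,banach}"
  assumes "\<And>x. norm x < K \<Longrightarrow> summable (\<lambda>n. c n * x ^ n)" and "norm z < K"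
  shows "deriv (\<lambda>x. \<Sum>n. c n * x ^ n) z = (\<Sum>n. diffs c n * z ^ n)"
  using termdiffs_strong'[OF assms] by (rule DERIV_imp_deriv)

lemma deriv2_powser:
  fixes c :: "nat \<Rightarrow> 'a::{real_normed_field,banach}"
  assumes sm: "\<And>x. norm x < K \<Longrightarrow> summable (\<lambda>n. c n * x ^ n)" and "norm z < K"
  shows "deriv (deriv (\<lambda>x. \<Sum>n. c n * x ^ n)) z = (\<Sum>n. diffs (diffs c) n * z ^ n)"
proof -
  have sm': "summable (\<lambda>n. diffs c n * x ^ n)" if "norm x < K" for x
    using termdiff_converges[OF that sm] .
  have "(deriv (\<lambda>x. \<Sum>n. c n * x ^ n) has_field_derivative (\<Sum>n. diffs (diffs c) n * z ^ n)) (at z)"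
    using termdiffs_strong'[of K "diffs c", OF sm' assms(2)]
  proof (rule has_field_derivative_transform_within_open)
    show "open (norm -` {..<K})" by (intro open_vimage) (simp_all add: continuous_on_norm)
  qed (use assms deriv_powser[OF sm] in auto)
  then show ?thesis by (rule DERIV_imp_deriv)
qed

lemma has_real_derivative_interval_integral:
  fixes f :: "real \<Rightarrow> real" and a b c x :: real
  assumes "continuous_on {a..b} f" "a \<le> c" "c \<le> b" "a < x" "x < b"
  shows "((\<lambda>u. LBINT y=c..u. f y) has_real_derivative f x) (at x)"
proof -
  have "((\<lambda>u. LBINT y=c..u. f y) has_vector_derivative f x) (at x within {a..b})"
    using interval_integral_FTC2[OF assms(2,3,1)] assms(4,5) by simp
  moreover have "at x within {a..b} = at x"
    using assms(4,5) by (intro at_within_interior) auto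
  ultimately show ?thesis
    by (simp add: has_real_derivative_iff_has_vector_derivative)
qed

lemma deriv2_iterated_interval_integral:
  fixes f :: "real \<Rightarrow> real" and a b c x :: real
  assumes f: "continuous_on {a..b} f" and "a \<le> c" "c \<le> b" "a < x" "x < b"
  shows "deriv (deriv (\<lambda>t. A - (LBINT s=t..b. (LBINT \<tau>=c..s. f \<tau>)))) x = f x"
proof -
  define G :: "real \<Rightarrow> real" where "G s = (LBINT \<tau>=c..s. f \<tau>)" for s
  have "continuous_on {a..b} G"
    unfolding G_def using interval_integral_FTC2[OF assms(2,3) f]
    by (intro continuous_on_vector_derivative) auto
  then have deriv_outer: "deriv (\<lambda>t. A + (LBINT s=b..t. G s)) t = G t" if "t \<in> {a<..<b}" for t
    using that has_real_derivative_interval_integral[of a b G b t]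
    by (auto intro!: DERIV_imp_deriv derivative_eq_intros)
  have "(G has_real_derivative f x) (at x)"
    unfolding G_def using has_real_derivative_interval_integral[OF assms] .
  then have "(deriv (\<lambda>t. A + (LBINT s=b..t. G s)) has_real_derivative f x) (at x)"
    by (rule has_field_derivative_transform_within_open[of _ _ _ "{a<..<b}"])
       (use assms deriv_outer in auto)
  moreover have endpoints_reversed: "(\<lambda>t::real. A - (LBINT s=t..b. G s)) = (\<lambda>t. A + (LBINT s=b..t. G s))"
    by (rule ext, subst interval_integral_endpoints_reverse) simp
  ultimately have "(deriv (\<lambda>t. A - (LBINT s=t..b. G s)) has_real_derivative f x) (at x)"
    by (simp only: endpoints_reversed)
  then show ?thesis
    unfolding G_def by (rule DERIV_imp_deriv)
qed

lemma sums_pos: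
  fixes f :: "nat \<Rightarrow> real"
  assumes "f sums s" "\<And>n. 0 \<le> f n" "0 < f i"
  shows "0 < s"
  using suminf_pos2[OF sums_summable[OF assms(1)] assms(2,3)] sums_unique[OF assms(1)] by simp

lemma ln_gt_pade:
  fixes y :: real
  assumes "1 < y"
  shows "2 * (y - 1) / (y + 1) < ln y"
proof -
  define g where "g x = ln x - 2 * (x - 1) / (x + 1)" for x :: real
  have "\<exists>d. (g has_real_derivative d) (at x) \<and> 0 < d" if "1 < x" "x < y" for x :: real
  proof (intro exI conjI)
    show "(g has_real_derivative 1 / x - 4 / (x + 1)^2) (at x)"
      unfolding g_def using that
      by (auto intro!: derivative_eq_intros simp: power2_eq_square field_simps)
    have "0 < (x - 1)^2" using that by simp
    then have "4 * x < (x + 1)^2" by (simp add: power2_eq_square algebra_simps)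
    then show "0 < 1 / x - 4 / (x + 1)^2" using that by (simp add: field_simps)
  qed
  moreover have "continuous_on {1..y} g"
    unfolding g_def by (intro continuous_intros) auto
  ultimately have "g 1 < g y"
    using DERIV_pos_imp_increasing_open[OF assms] by blast
  then show ?thesis by (simp add: g_def)
qed

definition model_coeff :: "(nat \<Rightarrow> real) \<Rightarrow> nat \<Rightarrow> real" where
  "model_coeff beta p = (if 2 \<le> p then (beta p)^2 else 0)"

lemma model_coeff_nonneg: "0 \<le> model_coeff beta p"
  by (simp add: model_coeff_def)

lemma xi_eq_powser: "xi beta = (\<lambda>t. \<Sum>p. model_coeff beta p * t ^ p)"
  unfolding xi_def model_coeff_def by (intro ext suminf_cong) simp

lemma model_summable:
  assumes "is_model beta"
  obtains K where "1 < K" "\<And>x. norm x < K \<Longrightarrow> summable (\<lambda>p. model_coeff beta p * x ^ p)"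
proof -
  obtain \<epsilon> where "\<epsilon> > 0" and "summable (\<lambda>p. if 2 \<le> p then (beta p)^2 * (1 + \<epsilon>) ^ p else 0)"
    using assms unfolding is_model_def by blast
  moreover have "(\<lambda>p. if 2 \<le> p then (beta p)^2 * (1 + \<epsilon>) ^ p else 0) = (\<lambda>p. model_coeff beta p * (1 + \<epsilon>) ^ p)"
    by (simp add: model_coeff_def fun_eq_iff)
  ultimately have sm: "summable (\<lambda>p. model_coeff beta p * (1 + \<epsilon>) ^ p)" by simp
  show thesis
    using powser_inside[OF sm] \<open>\<epsilon> > 0\<close> by (intro that[of "1 + \<epsilon>"]) auto
qed

lemma
  assumes "is_model beta"
  shows xi_1_sums: "model_coeff beta sums xi beta 1"
    and xi1_1_sums: "(\<lambda>p. real p * model_coeff beta p) sums xi1 beta 1"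
    and xi2_1_sums: "(\<lambda>p. real p * (real p - 1) * model_coeff beta p) sums xi2 beta 1"
    and xi2_0: "xi2 beta 0 = 2 * (beta 2)^2"
proof -
  obtain K where K: "1 < K" and sm: "\<And>x. norm x < K \<Longrightarrow> summable (\<lambda>p. model_coeff beta p * x ^ p)"
    using model_summable[OF assms] by blast
  let ?c = "model_coeff beta"
  have sm1: "summable (\<lambda>n. diffs ?c n * x ^ n)" if "norm x < K" for x
    using termdiff_converges[OF that sm] .
  have sm2: "summable (\<lambda>n. diffs (diffs ?c) n * x ^ n)" if "norm x < K" for x
    using termdiff_converges[OF that sm1] .
  show "?c sums xi beta 1"
    using sm[of 1] K by (simp add: xi_eq_powser summable_sums)
  have "diffs ?c sums xi1 beta 1"
    using sm1[of 1] K deriv_powser[OF sm, where z=1] by (simp add: xi1_def xi_eq_powser summable_sums)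
  moreover have "diffs ?c = (\<lambda>n. real (Suc n) * ?c (Suc n))"
    by (simp add: diffs_def fun_eq_iff)
  ultimately have "(\<lambda>n. real (Suc n) * ?c (Suc n)) sums xi1 beta 1" by simp
  then show "(\<lambda>p. real p * ?c p) sums xi1 beta 1"
    by (rule sums_Suc_imp[rotated]) simp
  have "diffs (diffs ?c) sums xi2 beta 1"
    using sm2[of 1] K deriv2_powser[OF sm, where z=1] by (simp add: xi2_def xi_eq_powser summable_sums)
  moreover have "diffs (diffs ?c) = (\<lambda>n. real (Suc (Suc n)) * (real (Suc (Suc n)) - 1) * ?c (Suc (Suc n)))"
    by (simp add: diffs_def fun_eq_iff)
  ultimately have "(\<lambda>n. real (Suc (Suc n)) * (real (Suc (Suc n)) - 1) * ?c (Suc (Suc n))) sums xi2 beta 1"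
    by simp
  then have "(\<lambda>n. real (Suc n) * (real (Suc n) - 1) * ?c (Suc n)) sums xi2 beta 1"
    by (rule sums_Suc_imp[rotated]) simp
  then show "(\<lambda>p. real p * (real p - 1) * ?c p) sums xi2 beta 1"
    by (rule sums_Suc_imp[rotated]) simp
  show "xi2 beta 0 = 2 * (beta 2)^2"
    using deriv2_powser[OF sm, where z=0] K
    by (simp add: xi2_def xi_eq_powser diffs_def model_coeff_def eval_nat_numeral)
qed

lemma model_coeff_pos_of_nonquadratic:
  assumes "\<not> (\<exists>a. \<forall>t\<in>{0..1}. xi beta t = a * t^2)"
  obtains p where "3 \<le> p" "0 < model_coeff beta p"
proof (rule ccontr)
  assume "\<not> thesis"
  then have "\<forall>p\<ge>3. \<not> 0 < model_coeff beta p" using that by blast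
  then have "model_coeff beta p = 0" if "p \<noteq> 2" for p
    using that model_coeff_nonneg[of beta p] by (cases "p \<le> 2") (auto simp: model_coeff_def)
  then have "xi beta t = model_coeff beta 2 * t^2" for t
    using suminf_finite[of "{2}" "\<lambda>p. model_coeff beta p * t ^ p"] by (simp add: xi_eq_powser)
  then show False using assms by blast
qed

lemma
  assumes "is_model beta" and "3 \<le> p" "0 < model_coeff beta p"
  shows xi1_1_gt_two_xi_1: "2 * xi beta 1 < xi1 beta 1"
    and xi2_1_gt_xi1_1: "xi1 beta 1 < xi2 beta 1"
proof -
  let ?c = "model_coeff beta"
  have nonneg: "0 \<le> (real q - 2) * ?c q" for q
    by (cases "2 \<le> q") (auto simp: model_coeff_def)
  have "(\<lambda>q. (real q - 2) * ?c q) sums (xi1 beta 1 - 2 * xi beta 1)"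
    using sums_diff[OF xi1_1_sums sums_mult[OF xi_1_sums, where c=2], OF assms(1) assms(1)]
    by (simp add: algebra_simps)
  from sums_pos[OF this nonneg, of p] show "2 * xi beta 1 < xi1 beta 1"
    using assms by simp
  have "(\<lambda>q. real q * ((real q - 2) * ?c q)) sums (xi2 beta 1 - xi1 beta 1)"
    using sums_diff[OF xi2_1_sums xi1_1_sums, OF assms(1) assms(1)] by (simp add: algebra_simps)
  from sums_pos[OF this, of p] show "xi1 beta 1 < xi2 beta 1"
    using assms nonneg by simp
qed

definition yfun :: "real \<Rightarrow> real" where
  "yfun y = (1 / (y - 1)) * ((y / (y - 1)) * ln y - 1)"

lemma yfun_altdef: "yfun y = (y * ln y - (y - 1)) / (y - 1)^2"
  by (cases "y = 1") (simp_all add: yfun_def field_simps power2_eq_square)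

lemma yfun_has_real_derivative:
  assumes "1 < x"
  shows "(yfun has_real_derivative (2 * (x - 1) - (x + 1) * ln x) / (x - 1)^3) (at x)"
proof -
  have "ln x * (x - 1)^2 - (x * ln x - (x - 1)) * (2 * x - 2)
      = (x - 1) * (2 * (x - 1) - (x + 1) * ln x)"
    by (simp add: algebra_simps power2_eq_square)
  moreover have "(x - 1)^4 = (x - 1) * (x - 1)^3"
    by (simp add: eval_nat_numeral)
  ultimately have "(2 * (x - 1) - (x + 1) * ln x) / (x - 1)^3
      = (ln x * (x - 1)^2 - (x * ln x - (x - 1)) * (2 * x - 2)) / (x - 1)^4"
    using assms by simp
  then show ?thesis
    unfolding yfun_altdef[abs_def] using assms by (auto intro!: derivative_eq_intros)
qed

lemma yfun_decreasing:
  assumes "1 < a" "a < b"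
  shows "yfun b < yfun a"
proof (rule DERIV_neg_imp_decreasing[OF assms(2)])
  fix x assume "a \<le> x" "x \<le> b"
  then have "1 < x" using assms by simp
  have "(x - 1) * 2 - (x + 1) * ln x < 0"
    using ln_gt_pade[OF \<open>1 < x\<close>] \<open>1 < x\<close> by (simp add: field_simps)
  then show "\<exists>d. (yfun has_real_derivative d) (at x) \<and> d < 0"
    using yfun_has_real_derivative[OF \<open>1 < x\<close>] \<open>1 < x\<close>
    by (intro exI conjI) (auto simp: mult.commute intro!: divide_neg_pos)
qed

lemma yfun_le_iff:
  assumes "1 < a" "1 < b"
  shows "yfun a \<le> yfun b \<longleftrightarrow> b \<le> a"
  using yfun_decreasing[of a b] yfun_decreasing[of b a] assms
  by (cases a b rule: linorder_cases) auto

lemma yfun_inj: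
  assumes "1 < a" "1 < b" "yfun a = yfun b"
  shows "a = b"
  using yfun_le_iff[of a b] yfun_le_iff[of b a] assms by auto

lemma yfun_surj:
  assumes "0 < k" "k < 1/2"
  obtains y where "1 < y" "yfun y = k"
proof -
  have "(yfun \<longlongrightarrow> 1/2) (at_right 1)"
    unfolding yfun_def by real_asymp
  then have "\<forall>\<^sub>F y in at_right 1. k < yfun y"
    using assms(2) by (rule order_tendstoD)
  then obtain c where "1 < c" and c: "\<And>y. 1 < y \<Longrightarrow> y < c \<Longrightarrow> k < yfun y"
    unfolding eventually_at_right_field by blast
  define a where "a = (1 + c) / 2"
  have "1 < a" "k < yfun a" using \<open>1 < c\<close> c[of a] unfolding a_def by auto
  have "(yfun \<longlongrightarrow> 0) at_top"
    unfolding yfun_def by real_asymp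
  then have "\<forall>\<^sub>F y in at_top. yfun y < k"
    using assms(1) by (rule order_tendstoD)
  then obtain N where N: "\<And>y. N \<le> y \<Longrightarrow> yfun y < k"
    unfolding eventually_at_top_linorder by blast
  define b where "b = max a N"
  have "a \<le> b" "yfun b < k" using N[of b] unfolding b_def by auto
  have "\<forall>x. a \<le> x \<and> x \<le> b \<longrightarrow> isCont yfun x"
    using \<open>1 < a\<close> unfolding yfun_def by (auto intro!: continuous_intros)
  then obtain y where "a \<le> y" "yfun y = k"
    using IVT2[of yfun b k a] \<open>a \<le> b\<close> \<open>k < yfun a\<close> \<open>yfun b < k\<close> by force
  then show thesis using \<open>1 < a\<close> by (intro that) auto
qed

lemma y_xi_spec:
  assumes "0 < xi beta 1 / xi1 beta 1" "xi beta 1 / xi1 beta 1 < 1/2"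
  shows "1 < y_xi beta" "yfun (y_xi beta) = xi beta 1 / xi1 beta 1"
proof -
  obtain y where "1 < y" "yfun y = xi beta 1 / xi1 beta 1"
    using yfun_surj[OF assms] .
  then have "\<exists>!y. 1 < y \<and> xi beta 1 / xi1 beta 1 = (1 / (y - 1)) * ((y / (y - 1)) * ln y - 1)"
    unfolding yfun_def[symmetric] using yfun_inj by (intro ex1I[of _ y]) auto
  from theI'[OF this] show "1 < y_xi beta" "yfun (y_xi beta) = xi beta 1 / xi1 beta 1"
    unfolding y_xi_def yfun_def[symmetric] by auto
qed

lemma yfun_add_div:
  fixes m c :: real
  assumes "0 < m" "0 < c"
  shows "(1 / m) * ((1 / m) * ln ((c + m) / c) - 1 / (c + m)) = yfun ((c + m) / c) / (c * (c + m))"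
proof -
  have "(c + m) / c - 1 = m / c" "(c + m) / c / (m / c) = (c + m) / m"
    using assms by (simp_all add: field_simps)
  then show ?thesis
    unfolding yfun_def using assms by (simp add: divide_simps)
qed

lemma mc_spec:
  assumes "xi beta 1 = 1" "2 < xi1 beta 1"
  shows "0 < fst (mc beta)" "0 < snd (mc beta)"
    and "(snd (mc beta) + fst (mc beta)) / snd (mc beta) = y_xi beta"
    and "snd (mc beta) * (snd (mc beta) + fst (mc beta)) = 1 / xi1 beta 1"
proof -
  define k Y where "k = 1 / xi1 beta 1" and "Y = y_xi beta"
  have "0 < k" "k < 1/2"
    using assms(2) unfolding k_def by (simp_all add: divide_simps)
  then have Y: "1 < Y" "yfun Y = k"
    using y_xi_spec[of beta] assms(1) unfolding k_def Y_def by simp_all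
  let ?Q = "\<lambda>m c. 0 < m \<and> 0 < c \<and> (c + m) / c = Y \<and> c * (c + m) = k"
  have system: "(0 < m \<and> 0 < c \<and> xi beta 1 = (1 / m) * ((1 / m) * ln ((c + m) / c) - 1 / (c + m)) \<and>
      1 / xi1 beta 1 = c * (c + m)) \<longleftrightarrow> ?Q m c" for m c :: real
  proof (cases "0 < m \<and> 0 < c")
    case True
    then have "1 < (c + m) / c" "0 < c * (c + m)" by simp_all
    have "xi beta 1 = (1 / m) * ((1 / m) * ln ((c + m) / c) - 1 / (c + m))
        \<longleftrightarrow> 1 = yfun ((c + m) / c) / (c * (c + m))"
      using True by (simp only: yfun_add_div assms(1))
    also have "\<dots> \<longleftrightarrow> yfun ((c + m) / c) = c * (c + m)"
      using \<open>0 < c * (c + m)\<close> by (auto simp: eq_divide_eq)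
    finally have "xi beta 1 = (1 / m) * ((1 / m) * ln ((c + m) / c) - 1 / (c + m))
        \<longleftrightarrow> yfun ((c + m) / c) = c * (c + m)" .
    moreover have "yfun ((c + m) / c) = k \<longleftrightarrow> (c + m) / c = Y"
      using yfun_inj[OF \<open>1 < (c + m) / c\<close> Y(1)] Y(2) by auto
    ultimately show ?thesis
      using True unfolding k_def by auto
  qed blast
  define c0 where "c0 = sqrt (k / Y)"
  have "0 < c0" "c0\<^sup>2 * Y = k"
    using \<open>0 < k\<close> Y unfolding c0_def by simp_all
  then have "?Q (c0 * (Y - 1)) c0"
    using Y by (simp add: algebra_simps power2_eq_square)
  moreover have "m = c0 * (Y - 1) \<and> c = c0" if "?Q m c" for m c
  proof -
    have "c + m = c * Y"
      using that by (simp add: divide_eq_eq mult.commute)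
    then have "c\<^sup>2 * Y = k"
      using that by (simp add: power2_eq_square mult.assoc)
    then have "c = c0"
      unfolding c0_def using that Y by (intro real_sqrt_unique[symmetric]) (simp_all add: eq_divide_eq)
    with \<open>c + m = c * Y\<close> show ?thesis by (simp add: algebra_simps)
  qed
  ultimately have "\<exists>!p. case p of (m, c) \<Rightarrow> ?Q m c" by blast
  from theI'[OF this] have "case mc beta of (m, c) \<Rightarrow> ?Q m c"
    unfolding mc_def system .
  then show "0 < fst (mc beta)" "0 < snd (mc beta)"
    and "(snd (mc beta) + fst (mc beta)) / snd (mc beta) = y_xi beta"
    and "snd (mc beta) * (snd (mc beta) + fst (mc beta)) = 1 / xi1 beta 1"
    unfolding k_def Y_def by (simp_all split: prod.splits)
qed

lemma deriv2_eta_0: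
  assumes "0 < fst (mc beta)" "0 < snd (mc beta)"
  shows "deriv (deriv (eta beta)) 0 = 1 / (phi beta 0)^2"
proof -
  have "phi beta \<tau> \<noteq> 0" if "\<tau> \<in> {-1..1}" for \<tau>
  proof -
    have "0 \<le> fst (mc beta) * (1 - \<tau>)" using assms that by simp
    then show ?thesis unfolding phi_def using assms by linarith
  qed
  then have "continuous_on {-1..1} (\<lambda>\<tau>. 1 / (phi beta \<tau>)^2)"
    unfolding phi_def by (intro continuous_intros) auto
  from deriv2_iterated_interval_integral[OF this, of 0 0 "xi beta 1"]
  show ?thesis
    unfolding eta_def[abs_def] zero_ereal_def one_ereal_def by simp
qed

lemma replicon_eq:
  assumes "xi beta 1 = 1" "2 < xi1 beta 1"
  shows "replicon beta = xi1 beta 1 / y_xi beta - xi2 beta 0"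
proof -
  define m c where "m = fst (mc beta)" and "c = snd (mc beta)"
  have "0 < m" "0 < c" "(c + m) / c = y_xi beta" "c * (c + m) = 1 / xi1 beta 1"
    using mc_spec[OF assms] unfolding m_def c_def by auto
  have "(phi beta 0)\<^sup>2 = (c * (c + m)) * ((c + m) / c)"
    unfolding phi_def m_def[symmetric] c_def[symmetric] using \<open>0 < c\<close>
    by (simp add: field_simps power2_eq_square)
  also have "\<dots> = y_xi beta / xi1 beta 1"
    using \<open>(c + m) / c = y_xi beta\<close> \<open>c * (c + m) = 1 / xi1 beta 1\<close> by simp
  finally have "(phi beta 0)\<^sup>2 = y_xi beta / xi1 beta 1" .
  then show ?thesis
    unfolding replicon_def using deriv2_eta_0 mc_spec[OF assms] by simp
qed

lemma replicon_nonneg_iff: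
  assumes "is_model beta" "xi beta 1 = 1" "2 < xi1 beta 1"
  shows "0 \<le> replicon beta \<longleftrightarrow> xi2 beta 0 = 0 \<or> y_xi beta \<le> xi1 beta 1 / xi2 beta 0"
proof -
  have "1 < y_xi beta"
    using y_xi_spec[of beta] assms(2,3) by (simp add: divide_simps)
  moreover have "0 \<le> xi2 beta 0"
    using xi2_0[OF assms(1)] by simp
  ultimately show ?thesis
    unfolding replicon_eq[OF assms(2,3)] using assms(3)
    by (cases "xi2 beta 0 = 0") (simp_all add: field_simps)
qed

lemma ABA_identity:
  fixes u v :: real
  assumes "0 < u" "u < v"
  shows "ln (v / u) - (v - u) * (v - u + u^2) / (v * u^2) = (v - u)^2 / (u * v) * (yfun (v / u) - 1 / u)"
proof -
  have "v / u - 1 = (v - u) / u" "v / u / ((v - u) / u) = v / (v - u)"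
    using assms by (simp_all add: field_simps)
  then show ?thesis
    unfolding yfun_def using assms
    by (simp add: divide_simps power2_eq_square) (simp add: algebra_simps)
qed

lemma pure_like_or_critical_iff:
  assumes "xi beta 1 = 1" "2 < xi1 beta 1" "xi1 beta 1 < xi2 beta 1"
  shows "pure_like beta \<or> critical beta \<longleftrightarrow> xi2 beta 1 / xi1 beta 1 \<le> y_xi beta"
proof -
  define n1 n2 where "n1 = xi1 beta 1" and "n2 = xi2 beta 1"
  have "0 < n1" "n1 < n2" "1 < n2 / n1"
    using assms unfolding n1_def n2_def by auto
  have Y: "1 < y_xi beta" "yfun (y_xi beta) = 1 / n1"
    using y_xi_spec[of beta] assms unfolding n1_def by (auto simp: field_simps)
  define P where "P = (n2 - n1)^2 / (n1 * n2)"
  have "0 < P"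
    unfolding P_def using \<open>0 < n1\<close> \<open>n1 < n2\<close> by simp
  have "pure_like beta \<or> critical beta \<longleftrightarrow> 0 \<le> P * (yfun (n2 / n1) - 1 / n1)"
    unfolding pure_like_def critical_def ABA_def Let_def n1_def[symmetric] n2_def[symmetric]
      ABA_identity[OF \<open>0 < n1\<close> \<open>n1 < n2\<close>] P_def
    by auto
  also have "\<dots> \<longleftrightarrow> yfun (y_xi beta) \<le> yfun (n2 / n1)"
    using \<open>0 < P\<close> Y by (simp add: zero_le_mult_iff)
  also have "\<dots> \<longleftrightarrow> n2 / n1 \<le> y_xi beta"
    using yfun_le_iff[OF Y(1) \<open>1 < n2 / n1\<close>] .
  finally show ?thesis unfolding n1_def n2_def .
qed

theorem lemma5p6:
  fixes beta :: "nat \<Rightarrow> real"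
  assumes "is_model beta"
    and "xi beta 1 = 1"
    and "\<not> (\<exists>a. \<forall>t\<in>{0..1}. xi beta t = a * t^2)"
  shows "(replicon beta \<ge> 0 \<and> (pure_like beta \<or> critical beta)) \<longleftrightarrow>
         (xi2 beta 1 / xi1 beta 1 \<le> y_xi beta \<and>
          (xi2 beta 0 = 0 \<or> y_xi beta \<le> xi1 beta 1 / xi2 beta 0))"
proof -
  obtain p where "3 \<le> p" "0 < model_coeff beta p"
    using model_coeff_pos_of_nonquadratic[OF assms(3)] .
  then have "2 < xi1 beta 1" "xi1 beta 1 < xi2 beta 1"
    using xi1_1_gt_two_xi_1[OF assms(1)] xi2_1_gt_xi1_1[OF assms(1)] assms(2) by auto
  then show ?thesis
    using replicon_nonneg_iff[OF assms(1,2)] pure_like_or_critical_iff[OF assms(2)] by blast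
qed

end
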